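(* Let $X$ be a compact metric space, $f\colon X\to X$ continuous, and $\bar x=(x_i)_{i\in\mathbb Z}$ a full orbit. For $k\in\mathbb N$ write $D_k=\overline{\{x_l: l\in\mathbb Z,\ k\nmid l\}}$. Then $$\mathrm{Per}(\bar x)=\{k\in\mathbb N:\exists N_0\in\mathbb N\ \text{with}\ x_{-N_0k}\notin D_k\},$$ $$\mathrm{Per}(\bar x)=\{k\in\mathbb N:\exists N_0\in\mathbb N\ \forall N\ge N_0\ \ x_{-Nk}\notin D_k\},$$ and $$\mathrm{Per}(\bar x)=\bigcup_{N=0}^{\infty}\{k\in\mathbb N: x_{-Nk}\notin D_k\}.$$
   Context: A full orbit is a sequence $\bar x=(x_i)_{i\in\mathbb Z}$ in $X$ with $f(x_i)=x_{i+1}$ for all $i$. $2^X$ is the space of nonempty closed subsets of $X$ with the Hausdorff metric, $2^f(C)=f(C)$. $\mathrm{Per}(\bar x)$ is the set of $k\in\mathbb N$ such that $\overline{\{x_{mk}:m\in\mathbb Z\}}$ is a periodic point of $2^f$ with fundamental period $k$. *)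

theory Defs
  imports "HOL-Analysis.Analysis"
begin

text \<open>Hyperspace 2^X: nonempty closed subsets of X (the Hausdorff metric plays no
role for periodicity). The induced map is 2^f(C) = f(C).\<close>
definition hyperspace :: "'a::metric_space set \<Rightarrow> 'a set set" where
  "hyperspace X = {C. C \<subseteq> X \<and> C \<noteq> {} \<and> closed C}"

definition induced_map :: "('a \<Rightarrow> 'a) \<Rightarrow> 'a set \<Rightarrow> 'a set" where
  "induced_map f C = f ` C"

definition periodic_fund :: "('b \<Rightarrow> 'b) \<Rightarrow> 'b \<Rightarrow> nat \<Rightarrow> bool" where
  "periodic_fund F c k \<longleftrightarrow> k > 0 \<and> (F ^^ k) c = c \<and> (\<forall>j. 0 < j \<and> j < k \<longrightarrow> (F ^^ j) c \<noteq> c)"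

definition full_orbit :: "'a set \<Rightarrow> ('a \<Rightarrow> 'a) \<Rightarrow> (int \<Rightarrow> 'a) \<Rightarrow> bool" where
  "full_orbit X f x \<longleftrightarrow> (\<forall>i. x i \<in> X \<and> f (x i) = x (i + 1))"

definition Per :: "'a::metric_space set \<Rightarrow> ('a \<Rightarrow> 'a) \<Rightarrow> (int \<Rightarrow> 'a) \<Rightarrow> nat set" where
  "Per X f x = {k. k > 0 \<and>
     (let C = closure (range (\<lambda>m::int. x (m * int k))) in
        C \<in> hyperspace X \<and> periodic_fund (induced_map f) C k)}"

definition Dset :: "(int \<Rightarrow> 'a::metric_space) \<Rightarrow> nat \<Rightarrow> 'a set" where
  "Dset x k = closure {x l | l. \<not> int k dvd l}"

end

theory Submission
  imports Defs
begin

text \<open>Split the orbit into its residue classes modulo k and let C j be the closure of the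
  class of j. Closure commutes with continuous images of compact sets, so 2^f maps C j onto
  C (j + 1), and C j only depends on j mod k. Hence C 0 is a periodic point of fundamental
  period k exactly when it differs from every C j with 0 < j < k, and D_k is the union of
  these C j, so a point x_{-Nk} of C 0 outside D_k separates C 0 from all of them.
  Conversely, if every x_{-Nk} lies in D_k, infinitely many lie in a single C j; since C j is
  invariant under f^k this forces C 0 \<subseteq> C j, and applying 2^f iterates gives
  C 0 \<subseteq> C j \<subseteq> C (2j) \<subseteq> ... \<subseteq> C (kj) = C 0. The same invariance makes
  x_{-Nk} \<notin> D_k persist for all larger N.\<close>

definition residue_closure :: "(int \<Rightarrow> 'a::metric_space) \<Rightarrow> nat \<Rightarrow> int \<Rightarrow> 'a set" where
  "residue_closure x k j = closure (range (\<lambda>m. x (m * int k + j)))"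

lemma closure_UN_finite:
  assumes "finite I"
  shows "closure (\<Union>i\<in>I. A i) = (\<Union>i\<in>I. closure (A i))"
proof
  show "closure (\<Union>i\<in>I. A i) \<subseteq> (\<Union>i\<in>I. closure (A i))"
    by (rule closure_minimal) (auto simp: assms closure_subset[THEN subsetD] intro!: closed_UN)
  show "(\<Union>i\<in>I. closure (A i)) \<subseteq> closure (\<Union>i\<in>I. A i)"
    by (auto intro: closure_mono[THEN subsetD, rotated])
qed

lemma compact_image_closure:
  fixes f :: "'a::topological_space \<Rightarrow> 'b::t2_space"
  assumes "compact (closure A)" "continuous_on (closure A) f"
  shows "f ` closure A = closure (f ` A)"
proof
  show "f ` closure A \<subseteq> closure (f ` A)"
    using assms(2) by (rule continuous_image_closure_subset) simp
  have "closed (f ` closure A)"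
    using assms by (simp add: compact_continuous_image compact_imp_closed)
  then show "closure (f ` A) \<subseteq> f ` closure A"
    by (simp add: closure_minimal closure_subset image_mono)
qed

lemma funpow_induced_map: "(induced_map f ^^ n) A = (f ^^ n) ` A"
  by (induction n) (auto simp: induced_map_def image_comp)

lemma full_orbit_funpow:
  assumes "full_orbit X f x"
  shows "(f ^^ n) (x i) = x (i + int n)"
  using assms by (induction n) (auto simp: full_orbit_def algebra_simps)

lemma residue_closure_add_mult: "residue_closure x k (j + t * int k) = residue_closure x k j"
proof -
  have "range (\<lambda>m. x (m * int k + (j + t * int k))) = range (\<lambda>m. x ((m + t) * int k + j))"
    by (simp add: algebra_simps)
  also have "\<dots> = range (\<lambda>m. x (m * int k + j))"
    using range_composition[of "\<lambda>m. x (m * int k + j)" "\<lambda>m. m + t"]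
    by (simp add: surj_plus_right)
  finally show ?thesis
    by (simp add: residue_closure_def)
qed

lemma residue_closure_subset:
  assumes "full_orbit X f x" "closed X"
  shows "residue_closure x k j \<subseteq> X"
  unfolding residue_closure_def
  using assms by (intro closure_minimal) (auto simp: full_orbit_def)

lemma Dset_eq_UN_residue_closure:
  assumes "k > 0"
  shows "Dset x k = (\<Union>j\<in>{1..<int k}. residue_closure x k j)"
proof -
  have "{x l | l. \<not> int k dvd l} = (\<Union>j\<in>{1..<int k}. range (\<lambda>m. x (m * int k + j)))"
  proof (rule equalityI; clarsimp)
    fix l assume "\<not> int k dvd l"
    then have "l mod int k \<noteq> 0" "0 \<le> l mod int k" "l mod int k < int k"
      using assms by (auto simp: dvd_eq_mod_eq_0)
    then have "l mod int k \<in> {1..<int k}"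
      by simp
    moreover have "l = (l div int k) * int k + l mod int k" by simp
    ultimately show "\<exists>j\<in>{1..<int k}. x l \<in> range (\<lambda>m. x (m * int k + j))"
      by (intro bexI[where x="l mod int k"] image_eqI[where x="l div int k"]) auto
  next
    fix j m assume "1 \<le> j" "j < int k"
    then have "\<not> int k dvd (m * int k + j)"
      by (simp add: dvd_add_right_iff zdvd_not_zless)
    then show "\<exists>l. x (m * int k + j) = x l \<and> \<not> int k dvd l" by blast
  qed
  then show ?thesis
    unfolding Dset_def residue_closure_def by (simp add: closure_UN_finite)
qed

context
  fixes X :: "'a::metric_space set" and f :: "'a \<Rightarrow> 'a" and x :: "int \<Rightarrow> 'a"
  assumes compact: "compact X" and cont: "continuous_on X f" and orbit: "full_orbit X f x"
begin

lemma induced_map_residue_closure: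
  "induced_map f (residue_closure x k j) = residue_closure x k (j + 1)"
proof -
  have sub: "residue_closure x k j \<subseteq> X"
    using orbit compact by (simp add: residue_closure_subset compact_imp_closed)
  have "f ` range (\<lambda>m. x (m * int k + j)) = range (\<lambda>m. x (m * int k + (j + 1)))"
    using orbit by (auto simp: full_orbit_def image_comp add.assoc)
  moreover have "compact (residue_closure x k j)"
    using sub compact by (metis closed_closure compact_Int_closed inf.absorb_iff2 residue_closure_def)
  ultimately show ?thesis
    using sub cont compact_image_closure continuous_on_subset
    unfolding induced_map_def residue_closure_def by metis
qed

lemma funpow_induced_map_residue_closure:
  "(induced_map f ^^ n) (residue_closure x k j) = residue_closure x k (j + int n)"
  by (induction n) (simp_all add: induced_map_residue_closure algebra_simps)

lemma funpow_mult_mem_residue_closure: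
  assumes "y \<in> residue_closure x k j"
  shows "(f ^^ (t * k)) y \<in> residue_closure x k j"
proof -
  have "(f ^^ (t * k)) y \<in> (induced_map f ^^ (t * k)) (residue_closure x k j)"
    using assms by (simp add: funpow_induced_map)
  also have "\<dots> = residue_closure x k j"
    using residue_closure_add_mult[of x k j "int t"]
    by (simp add: funpow_induced_map_residue_closure)
  finally show ?thesis .
qed

lemma Per_iff_residue_closures_differ:
  assumes "k > 0"
  shows "k \<in> Per X f x \<longleftrightarrow>
    (\<forall>j. 0 < j \<and> j < k \<longrightarrow> residue_closure x k (int j) \<noteq> residue_closure x k 0)"
proof -
  have "residue_closure x k 0 \<in> hyperspace X"
    using residue_closure_subset[OF orbit compact_imp_closed[OF compact], of k 0]
    by (auto simp: hyperspace_def residue_closure_def)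
  moreover have "(induced_map f ^^ n) (residue_closure x k 0) = residue_closure x k (int n)" for n
    using funpow_induced_map_residue_closure[of n k 0] by simp
  moreover have "residue_closure x k (int k) = residue_closure x k 0"
    using residue_closure_add_mult[of x k 0 1] by simp
  moreover have "closure (range (\<lambda>m. x (m * int k))) = residue_closure x k 0"
    by (simp add: residue_closure_def)
  ultimately show ?thesis
    using assms by (auto simp: Per_def periodic_fund_def)
qed

lemma not_in_Dset_mono:
  assumes "k > 0" "x (- (int N0 * int k)) \<notin> Dset x k" "N0 \<le> N"
  shows "x (- (int N * int k)) \<notin> Dset x k"
proof
  assume "x (- (int N * int k)) \<in> Dset x k"
  then obtain j where j: "j \<in> {1..<int k}" "x (- (int N * int k)) \<in> residue_closure x k j"
    using Dset_eq_UN_residue_closure[OF assms(1), of x] by auto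
  have "(f ^^ ((N - N0) * k)) (x (- (int N * int k))) \<in> residue_closure x k j"
    by (rule funpow_mult_mem_residue_closure[OF j(2)])
  moreover have "(f ^^ ((N - N0) * k)) (x (- (int N * int k))) = x (- (int N0 * int k))"
    using full_orbit_funpow[OF orbit] assms(3) by (simp add: of_nat_diff algebra_simps)
  ultimately have "x (- (int N0 * int k)) \<in> residue_closure x k j"
    by simp
  then show False
    using j(1) assms(2) Dset_eq_UN_residue_closure[OF assms(1), of x] by auto
qed

lemma residue_closure_0_subset:
  assumes "infinite {N::nat. x (- (int N * int k)) \<in> residue_closure x k j}"
  shows "residue_closure x k 0 \<subseteq> residue_closure x k j"
proof -
  have "x (m * int k) \<in> residue_closure x k j" for m
  proof -
    obtain N where N: "nat (- m) \<le> N" "x (- (int N * int k)) \<in> residue_closure x k j"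
      using assms unfolding infinite_nat_iff_unbounded_le by blast
    have "(f ^^ (nat (m + int N) * k)) (x (- (int N * int k))) \<in> residue_closure x k j"
      by (rule funpow_mult_mem_residue_closure[OF N(2)])
    moreover have "- (int N * int k) + int (nat (m + int N) * k) = m * int k"
      using N(1) by (simp add: algebra_simps)
    ultimately show ?thesis
      by (simp add: full_orbit_funpow[OF orbit])
  qed
  then show ?thesis
    unfolding residue_closure_def[of x k 0]
    by (intro closure_minimal) (auto simp: residue_closure_def)
qed

lemma residue_closure_eq_0_if_subset:
  assumes "k > 0" "residue_closure x k 0 \<subseteq> residue_closure x k (int j)"
  shows "residue_closure x k (int j) = residue_closure x k 0"
proof -
  have shift: "residue_closure x k (int n) \<subseteq> residue_closure x k (int j + int n)" for n
    using image_mono[OF assms(2), of "f ^^ n"]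
    by (simp add: funpow_induced_map[symmetric] funpow_induced_map_residue_closure)
  have chain: "residue_closure x k (int j) \<subseteq> residue_closure x k (int (Suc t * j))" for t
  proof (induction t)
    case (Suc t)
    then show ?case
      using shift[of "Suc t * j"] by (simp add: algebra_simps)
  qed simp
  have "residue_closure x k (int (Suc (k - 1) * j)) = residue_closure x k 0"
    using residue_closure_add_mult[of x k 0 "int j"] assms(1) by (simp add: algebra_simps)
  then show ?thesis
    using chain[of "k - 1"] assms(2) by auto
qed

lemma Per_iff_ex_not_in_Dset:
  assumes "k > 0"
  shows "k \<in> Per X f x \<longleftrightarrow> (\<exists>N::nat. x (- (int N * int k)) \<notin> Dset x k)"
proof
  assume "\<exists>N::nat. x (- (int N * int k)) \<notin> Dset x k"
  then obtain N where N: "x (- (int N * int k)) \<notin> Dset x k" by blast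
  have in0: "x (- (int N * int k)) \<in> residue_closure x k 0"
    unfolding residue_closure_def
    by (rule closure_subset[THEN subsetD]) (rule image_eqI[where x="- int N"], auto)
  show "k \<in> Per X f x"
    unfolding Per_iff_residue_closures_differ[OF assms]
  proof (intro allI impI)
    fix j assume "0 < j \<and> j < k"
    then have "x (- (int N * int k)) \<notin> residue_closure x k (int j)"
      using N Dset_eq_UN_residue_closure[OF assms, of x] by auto
    with in0 show "residue_closure x k (int j) \<noteq> residue_closure x k 0"
      by blast
  qed
next
  assume "k \<in> Per X f x"
  show "\<exists>N::nat. x (- (int N * int k)) \<notin> Dset x k"
  proof (rule ccontr)
    assume "\<not> ?thesis"
    then have "UNIV = (\<Union>j\<in>{1..<int k}. {N::nat. x (- (int N * int k)) \<in> residue_closure x k j})"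
      using Dset_eq_UN_residue_closure[OF assms, of x] by auto
    then obtain j where j: "j \<in> {1..<int k}"
      "infinite {N::nat. x (- (int N * int k)) \<in> residue_closure x k j}"
      by (metis finite_UN_I finite_atLeastLessThan_int infinite_UNIV_nat)
    have "residue_closure x k 0 \<subseteq> residue_closure x k (int (nat j))"
      using residue_closure_0_subset[OF j(2)] j(1) by simp
    then have "residue_closure x k (int (nat j)) = residue_closure x k 0"
      by (rule residue_closure_eq_0_if_subset[OF assms])
    moreover have "0 < nat j" "nat j < k"
      using j(1) by auto
    ultimately show False
      using \<open>k \<in> Per X f x\<close> Per_iff_residue_closures_differ[OF assms] by blast
  qed
qed

end

theorem lemma4p6:
  fixes X :: "'a::metric_space set" and f :: "'a \<Rightarrow> 'a" and x :: "int \<Rightarrow> 'a"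
  assumes "compact X" and "continuous_on X f" and "f ` X \<subseteq> X"
    and "full_orbit X f x"
  shows "Per X f x = {k. k > 0 \<and> (\<exists>N0::nat. x (- (int N0 * int k)) \<notin> Dset x k)} \<and>
         Per X f x = {k. k > 0 \<and> (\<exists>N0::nat. \<forall>N\<ge>N0. x (- (int N * int k)) \<notin> Dset x k)} \<and>
         Per X f x = (\<Union>N::nat. {k. k > 0 \<and> x (- (int N * int k)) \<notin> Dset x k})"
proof -
  have pos: "k \<in> Per X f x \<Longrightarrow> k > 0" for k
    by (simp add: Per_def)
  have ex: "Per X f x = {k. k > 0 \<and> (\<exists>N0::nat. x (- (int N0 * int k)) \<notin> Dset x k)}"
    using Per_iff_ex_not_in_Dset[OF assms(1,2,4)] pos by blast
  moreover have "Per X f x = {k. k > 0 \<and> (\<exists>N0::nat. \<forall>N\<ge>N0. x (- (int N * int k)) \<notin> Dset x k)}"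
    unfolding ex using not_in_Dset_mono[OF assms(1,2,4)] by blast
  ultimately show ?thesis
    by blast
qed

end
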